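(* Let $G$ be a finite group. If $OD(G)$ contains a cycle, then the girth of $OD(G)$ equals $3$.
   Context: For a finite group $G$, $o(x)$ denotes the order of $x\in G$. The order-divisor graph $OD(G)$ is the simple undirected graph with vertex set $G$, in which two distinct vertices $x,y$ are adjacent if and only if $o(x)\neq o(y)$ and either $o(x)\mid o(y)$ or $o(y)\mid o(x)$. The girth $g(\Gamma)$ of a graph $\Gamma$ is the length of a shortest cycle in $\Gamma$. *)

theory Defs
  imports "HOL-Algebra.Multiplicative_Group"
begin

definition od_adj :: "('a, 'b) monoid_scheme \<Rightarrow> 'a \<Rightarrow> 'a \<Rightarrow> bool" where
  "od_adj G x y \<longleftrightarrow> x \<in> carrier G \<and> y \<in> carrier G \<and> x \<noteq> y \<and>
     group.ord G x \<noteq> group.ord G y \<and>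
     (group.ord G x dvd group.ord G y \<or> group.ord G y dvd group.ord G x)"

definition is_cycle :: "'a set \<Rightarrow> ('a \<Rightarrow> 'a \<Rightarrow> bool) \<Rightarrow> 'a list \<Rightarrow> bool" where
  "is_cycle V E vs \<longleftrightarrow> length vs \<ge> 3 \<and> distinct vs \<and> set vs \<subseteq> V \<and>
     (\<forall>i < length vs. E (vs ! i) (vs ! ((i + 1) mod length vs)))"

definition has_cycle :: "'a set \<Rightarrow> ('a \<Rightarrow> 'a \<Rightarrow> bool) \<Rightarrow> bool" where
  "has_cycle V E \<longleftrightarrow> (\<exists>vs. is_cycle V E vs)"

text \<open>Girth: length of a shortest cycle (only meaningful when a cycle exists).\<close>
definition girth :: "'a set \<Rightarrow> ('a \<Rightarrow> 'a \<Rightarrow> bool) \<Rightarrow> nat" where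
  "girth V E = (LEAST n. \<exists>vs. is_cycle V E vs \<and> length vs = n)"

end

theory Submission
  imports Defs
begin

text \<open>The identity is the unique element of order 1, and 1 divides every order, so the
  identity is adjacent to every other vertex of OD(G). A cycle has an edge avoiding any
  prescribed vertex; joining the ends of such an edge to the identity yields a triangle.\<close>

lemma girth_le_length:
  assumes "is_cycle V E vs"
  shows "girth V E \<le> length vs"
  unfolding girth_def using assms by (auto intro: Least_le)

lemma is_cycle_length_ge_3:
  assumes "is_cycle V E vs"
  shows "3 \<le> length vs"
  using assms unfolding is_cycle_def by simp

lemma girth_eq_3_if_triangle:
  assumes "is_cycle V E [a, b, c]"
  shows "girth V E = 3"
proof -
  have "girth V E \<le> 3" using girth_le_length[OF assms] by simp
  moreover have "3 \<le> girth V E"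
    unfolding girth_def using assms
    by (intro LeastI2_ex[where Q = "\<lambda>n. 3 \<le> n"]) (auto dest: is_cycle_length_ge_3)
  ultimately show ?thesis by simp
qed

lemma is_cycle_edge_avoiding:
  assumes "is_cycle V E vs"
  obtains u w where "E u w" "u \<in> set vs" "w \<in> set vs" "u \<noteq> e" "w \<noteq> e"
proof -
  define n where "n = length vs"
  have n: "3 \<le> n" and dist: "distinct vs"
    and edge: "\<And>i. i < n \<Longrightarrow> E (vs ! i) (vs ! ((i + 1) mod n))"
    using assms unfolding is_cycle_def n_def by auto
  obtain i where i: "i < n" "vs ! i \<noteq> e" "vs ! ((i + 1) mod n) \<noteq> e"
  proof (cases "e \<in> set vs")
    case True
    then obtain j where j: "j < n" "e = vs ! j" by (auto simp: in_set_conv_nth n_def)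
    \<comment> \<open>take the edge from index j+1 to j+2 (mod n); it misses index j because n \<ge> 3\<close>
    have "(j + 1) mod n \<noteq> j" "((j + 1) mod n + 1) mod n \<noteq> j" "(j + 1) mod n < n"
      using n j(1) by (auto simp: mod_if)
    moreover have "\<And>k. k < n \<Longrightarrow> k \<noteq> j \<Longrightarrow> vs ! k \<noteq> vs ! j"
      using dist j(1) by (simp add: nth_eq_iff_index_eq n_def)
    ultimately show ?thesis
      using that[of "(j + 1) mod n"] n j by (metis mod_less_divisor neq0_conv not_numeral_le_zero)
  next
    case False
    moreover have "vs ! 0 \<in> set vs" "vs ! 1 \<in> set vs" using n by (auto simp: n_def intro!: nth_mem)
    ultimately show ?thesis using that[of 0] n by auto
  qed
  moreover have "(i + 1) mod n < n" using n by simp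
  ultimately show ?thesis
    using that[OF edge[OF i(1)]] by (simp add: n_def nth_mem)
qed

context group
begin

lemma od_adj_sym: "od_adj G x y \<longleftrightarrow> od_adj G y x"
  unfolding od_adj_def by auto

lemma od_adj_one:
  assumes "x \<in> carrier G" "x \<noteq> \<one>"
  shows "od_adj G \<one> x"
  using assms ord_eq_1[of x] unfolding od_adj_def by auto

lemma od_adj_triangle_one:
  assumes "od_adj G x y" "x \<noteq> \<one>" "y \<noteq> \<one>"
  shows "is_cycle (carrier G) (od_adj G) [\<one>, x, y]"
proof -
  have xy: "x \<in> carrier G" "y \<in> carrier G" "x \<noteq> y"
    using assms(1) unfolding od_adj_def by auto
  have "od_adj G \<one> x" "od_adj G y \<one>"
    using od_adj_one od_adj_sym xy assms by blast+
  then show ?thesis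
    unfolding is_cycle_def using assms xy by (auto simp: less_Suc_eq nth_Cons')
qed

lemma girth_od_graph:
  assumes "has_cycle (carrier G) (od_adj G)"
  shows "girth (carrier G) (od_adj G) = 3"
proof -
  obtain vs where "is_cycle (carrier G) (od_adj G) vs"
    using assms unfolding has_cycle_def by blast
  then obtain x y where "od_adj G x y" "x \<noteq> \<one>" "y \<noteq> \<one>"
    by (rule is_cycle_edge_avoiding)
  then show ?thesis
    by (blast intro: girth_eq_3_if_triangle od_adj_triangle_one)
qed

end

theorem mainTheorem3:
  fixes G :: "('a, 'b) monoid_scheme"
  assumes "group G" and "finite (carrier G)"
    and "has_cycle (carrier G) (od_adj G)"
  shows "girth (carrier G) (od_adj G) = 3"
  using group.girth_od_graph[OF assms(1,3)] .

end
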